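(* Let $\alpha>0$, $\hbar>0$, $\sigma>0$, let $n\geq2$ be an integer, and let $N_G=\sqrt{2/(\sigma^{2n+1}\Gamma(n+\frac12))}$. For $\tau\in\mathbb{R}$ define $$E(\tau)=\frac{\alpha}{\hbar}N_G^{2}\int_{0}^{\infty}dp'\int_{0}^{\infty}dp\,(-1)^{2n-1}p'^{\,n}p^{\,n-1}e^{-\frac{1}{2\sigma^{2}}\left(p^{2}+p'^{2}\right)}\sin\!\left(\frac{\alpha^{2}\tau}{\hbar}\left(\frac{1}{p'}-\frac{1}{p}\right)\right)\mathrm{sgn}(p'-p).$$ Then: (i) $E(0)=0$; (ii) $E$ is differentiable at $0$ and $\frac{dE}{d\tau}(0)>0$; (iii) $E(-\tau)=-E(\tau)$ for all $\tau\in\mathbb{R}$; (iv) $\lim_{\tau\to\pm\infty}E(\tau)=0$.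
   Context: $E(\tau)$ is the real part of the expectation value of the gauge-invariant expansion scalar of radial null geodesics in the Schwarzschild interior, with clock operator $\hat T=\hat b$, evaluated on the physical state $\psi_n(p_a)=N_G\Theta(-p_a)p_a^{n}e^{-p_a^{2}/(2\sigma^{2})}$ (after the substitution $p_a\to-p_a$). Properties (i)–(iii) express a vanishing and sign change of the expansion at $\tau=0$ (a black-hole-to-white-hole bounce). *)

theory Defs
  imports "HOL-Analysis.Analysis"
begin

definition NG :: "real \<Rightarrow> nat \<Rightarrow> real" where
  "NG \<sigma> n = sqrt (2 / (\<sigma> ^ (2*n+1) * Gamma (real n + 1/2)))"

definition Eexp :: "real \<Rightarrow> real \<Rightarrow> real \<Rightarrow> nat \<Rightarrow> real \<Rightarrow> real" where
  "Eexp \<alpha> hb \<sigma> n \<tau> =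
     \<alpha> / hb * (NG \<sigma> n)\<^sup>2 *
     (LINT p':{0<..}|lborel. (LINT p:{0<..}|lborel.
        (-1) ^ (2*n-1) * p' ^ n * p ^ (n-1) * exp (- (p\<^sup>2 + p'\<^sup>2) / (2 * \<sigma>\<^sup>2))
        * sin (\<alpha>\<^sup>2 * \<tau> / hb * (1/p' - 1/p)) * sgn (p' - p)))"

end

(*
  With s = 2 sigma^2 and L = alpha^2 tau / hb the integrand factorises, and E(tau) is a negative
  multiple of Phi(L) = int_0^oo q^n e^(-q^2/s) J(L, q) dq, where
  J(L, q) = int_0^oo p^(n-1) e^(-p^2/s) sin (L (1/q - 1/p)) sgn (q - p) dp.
  Phi(0) = 0 and the oddness of Phi are inherited from sin.

  Since sin (L x) / L tends to x as L -> 0 and is bounded by |x|, dominated convergence, first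
  in p and then in q, gives Phi'(0) = int_0^oo q^n e^(-q^2/s) J'(q) dq with
  J'(q) = int_0^oo p^(n-1) e^(-p^2/s) (1/q - 1/p) sgn (q - p) dp; the bound
  p^(n-1) |1/q - 1/p| <= p^(n-1)/q + p^(n-2) is integrable because n >= 2. The integrand of J'(q)
  is negative for p <> q, so Phi'(0) < 0.

  The phase L (1/q - 1/p) has derivative L/p^2, so integrating by parts against p^(n+1) e^(-p^2/s)
  on (0, q) and on (q, oo) gives |J(L, q)| <= (C + 2 q^(n+1)) / |L|, hence Phi(L) = O(1/|L|).
*)

theory Submission
  imports Defs "HOL-Probability.Distributions" "HOL-Real_Asymp.Real_Asymp"
begin

lemma integrable_power_mult_exp_neg_sq:
  assumes "s > 0"
  shows "integrable lborel (\<lambda>x::real. x ^ k * exp (- x\<^sup>2 / s))"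
proof -
  define \<sigma> where "\<sigma> = sqrt (s / 2)"
  have \<sigma>: "\<sigma> > 0" "2 * \<sigma>\<^sup>2 = s"
    using assms by (auto simp: \<sigma>_def)
  have "integrable lborel (\<lambda>x. sqrt (2 * pi * \<sigma>\<^sup>2) * (normal_density 0 \<sigma> x * (x - 0) ^ k))"
    using integrable_normal_moment[OF \<sigma>(1), of 0 k] by (rule integrable_mult_right)
  also have "(\<lambda>x. sqrt (2 * pi * \<sigma>\<^sup>2) * (normal_density 0 \<sigma> x * (x - 0) ^ k))
      = (\<lambda>x. x ^ k * exp (- x\<^sup>2 / s))"
    using \<sigma> by (auto simp: normal_density_def)
  finally show ?thesis .
qed

lemma set_integrable_power_mult_exp_neg_sq:
  assumes "s > 0" and "A \<in> sets lborel"
  shows "set_integrable lborel A (\<lambda>x::real. x ^ k * exp (- x\<^sup>2 / s))"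
  unfolding set_integrable_def
  using integrable_mult_indicator[OF assms(2) integrable_power_mult_exp_neg_sq[OF assms(1)]] .

lemma set_integrable_abs_le:
  fixes f g :: "'a \<Rightarrow> real"
  assumes "set_integrable M A g" and "set_borel_measurable M A f"
    and "\<And>x. x \<in> A \<Longrightarrow> \<bar>f x\<bar> \<le> g x"
  shows "set_integrable M A f"
  using assms(1,2)
  by (rule set_integrable_bound) (use assms(3) in \<open>auto intro!: AE_I2 order_trans[OF _ abs_ge_self]\<close>)

lemma set_integral_uminus_real: "(LINT x:A|M. - f x) = - (LINT x:A|M. (f x :: real))"
  unfolding set_lebesgue_integral_def by simp

lemma abs_set_integral_le:
  fixes f g :: "'a \<Rightarrow> real"
  assumes g: "set_integrable M B g" and "A \<subseteq> B"
    and g_nonneg: "\<And>x. x \<in> B \<Longrightarrow> 0 \<le> g x" and f_le: "\<And>x. x \<in> A \<Longrightarrow> \<bar>f x\<bar> \<le> g x"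
  shows "\<bar>LINT x:A|M. f x\<bar> \<le> (LINT x:B|M. g x)"
proof -
  have "\<bar>indicator A x * f x\<bar> \<le> indicator B x * g x" "0 \<le> indicator B x * g x" for x
    using \<open>A \<subseteq> B\<close> g_nonneg f_le by (auto simp: indicator_def)
  with g show ?thesis
    unfolding set_lebesgue_integral_def set_integrable_def
    by (intro order_trans[OF integral_abs_bound integral_mono']) auto
qed

lemma set_integral_pos_AE:
  fixes f :: "'a \<Rightarrow> real"
  assumes f: "set_integrable M A f" and A: "A \<in> sets M" "emeasure M A \<noteq> 0"
    and pos: "AE x in M. x \<in> A \<longrightarrow> 0 < f x"
  shows "0 < (LINT x:A|M. f x)"
proof -
  let ?F = "\<lambda>x. indicator A x *\<^sub>R f x"
  have F: "integrable M ?F"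
    using f unfolding set_integrable_def .
  have F_nonneg: "AE x in M. 0 \<le> ?F x"
    using pos by eventually_elim (auto simp: indicator_def)
  have "(LINT x:A|M. f x) \<noteq> 0"
  proof
    assume "(LINT x:A|M. f x) = 0"
    then have "AE x in M. ?F x = 0"
      using integral_nonneg_eq_0_iff_AE[OF F F_nonneg] unfolding set_lebesgue_integral_def by simp
    with pos have "AE x in M. x \<notin> A"
      by eventually_elim (auto simp: indicator_def)
    then show False
      using AE_iff_measurable[OF A(1), of "\<lambda>x. x \<notin> A"] A(1,2) sets.sets_into_space by blast
  qed
  moreover have "0 \<le> (LINT x:A|M. f x)"
    unfolding set_lebesgue_integral_def by (rule integral_nonneg_AE[OF F_nonneg])
  ultimately show ?thesis by simp
qed

lemma emeasure_lborel_Ioi_ne_0: "emeasure lborel {a<..} \<noteq> (0 :: ennreal)" for a :: real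
proof -
  have "emeasure lborel {a<..<a+1} \<le> emeasure lborel {a<..}"
    by (rule emeasure_mono) auto
  then show ?thesis
    by auto
qed

context
  fixes s :: "real \<Rightarrow> 'a \<Rightarrow> real" and f w :: "'a \<Rightarrow> real" and M A and c :: real
  assumes s_meas: "\<And>t. t \<noteq> c \<Longrightarrow> set_borel_measurable M A (s t)"
    and f_meas: "set_borel_measurable M A f"
    and w: "set_integrable M A w"
    and lim: "\<And>x. x \<in> A \<Longrightarrow> ((\<lambda>t. s t x) \<longlongrightarrow> f x) (at c)"
    and bound: "\<And>t x. t \<noteq> c \<Longrightarrow> x \<in> A \<Longrightarrow> \<bar>s t x\<bar> \<le> w x"
begin

lemma set_integrable_dominated_convergence_at: "set_integrable M A f"
proof (rule set_integrable_abs_le[OF w f_meas])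
  fix x assume "x \<in> A"
  show "\<bar>f x\<bar> \<le> w x"
  proof (rule tendsto_upperbound)
    show "((\<lambda>t. \<bar>s t x\<bar>) \<longlongrightarrow> \<bar>f x\<bar>) (at c)"
      using lim[OF \<open>x \<in> A\<close>] by (rule tendsto_rabs)
    show "\<forall>\<^sub>F t in at c. \<bar>s t x\<bar> \<le> w x"
      using \<open>x \<in> A\<close> by (auto simp: eventually_at_filter intro!: always_eventually bound)
  qed simp
qed

lemma set_integral_dominated_convergence_at:
  "((\<lambda>t. LINT x:A|M. s t x) \<longlongrightarrow> (LINT x:A|M. f x)) (at c)"
  unfolding tendsto_at_iff_sequentially
proof (intro allI impI)
  fix X :: "nat \<Rightarrow> real"
  assume "\<forall>i. X i \<in> UNIV - {c}" and X: "X \<longlonglongrightarrow> c"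
  then have X_ne: "X i \<noteq> c" for i by auto
  show "((\<lambda>t. LINT x:A|M. s t x) \<circ> X) \<longlonglongrightarrow> (LINT x:A|M. f x)"
    unfolding o_def set_lebesgue_integral_def
  proof (rule integral_dominated_convergence)
    show "(\<lambda>x. indicator A x *\<^sub>R f x) \<in> borel_measurable M"
      using f_meas unfolding set_borel_measurable_def .
    show "(\<lambda>x. indicator A x *\<^sub>R s (X i) x) \<in> borel_measurable M" for i
      using s_meas[OF X_ne] unfolding set_borel_measurable_def .
    show "integrable M (\<lambda>x. indicator A x *\<^sub>R w x)"
      using w unfolding set_integrable_def .
    show "AE x in M. (\<lambda>i. indicator A x *\<^sub>R s (X i) x) \<longlonglongrightarrow> indicator A x *\<^sub>R f x"
    proof (rule AE_I2)
      fix x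
      show "(\<lambda>i. indicator A x *\<^sub>R s (X i) x) \<longlonglongrightarrow> indicator A x *\<^sub>R f x"
      proof (cases "x \<in> A")
        case True
        have "((\<lambda>t. s t x) \<circ> X) \<longlonglongrightarrow> f x"
          using lim[OF True] X X_ne unfolding tendsto_at_iff_sequentially by auto
        with True show ?thesis by (simp add: o_def)
      qed simp
    qed
    show "AE x in M. norm (indicator A x *\<^sub>R s (X i) x) \<le> indicator A x *\<^sub>R w x" for i
      using bound[OF X_ne] by (auto simp: indicator_def)
  qed
qed

end

lemma tendsto_sin_mult_div_at_0: "((\<lambda>t::real. sin (t * x) / t) \<longlongrightarrow> x) (at 0)"
proof -
  have "((\<lambda>t::real. sin (t * x)) has_real_derivative x) (at 0)"
    by (rule derivative_eq_intros refl | simp)+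
  then show ?thesis
    unfolding has_field_derivative_iff by simp
qed

lemma abs_sin_mult_div_le: "\<bar>sin (t * x) / t\<bar> \<le> \<bar>x :: real\<bar>"
proof (cases "t = 0")
  case False
  have "\<bar>sin (t * x)\<bar> \<le> \<bar>t\<bar> * \<bar>x\<bar>"
    using abs_sin_x_le_abs_x[of "t * x"] by (simp add: abs_mult)
  with False show ?thesis
    by (simp add: divide_le_eq mult.commute)
qed simp

definition inner_integral :: "nat \<Rightarrow> real \<Rightarrow> real \<Rightarrow> real \<Rightarrow> real" where
  "inner_integral n s L q =
     (LINT p:{0<..}|lborel. p ^ (n-1) * exp (- p\<^sup>2 / s) * sin (L * (1/q - 1/p)) * sgn (q - p))"

definition outer_integral :: "nat \<Rightarrow> real \<Rightarrow> real \<Rightarrow> real" where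
  "outer_integral n s L = (LINT q:{0<..}|lborel. q ^ n * exp (- q\<^sup>2 / s) * inner_integral n s L q)"

lemma Eexp_eq_outer_integral:
  assumes "n \<ge> 1"
  shows "Eexp \<alpha> hb \<sigma> n \<tau> = - (\<alpha> / hb * (NG \<sigma> n)\<^sup>2) * outer_integral n (2 * \<sigma>\<^sup>2) (\<alpha>\<^sup>2 * \<tau> / hb)"
proof -
  have sign: "(-1::real) ^ (2*n-1) = -1"
    using assms by (simp add: power_minus1_odd)
  have integrand: "(-1) ^ (2*n-1) * q ^ n * p ^ (n-1) * exp (- (p\<^sup>2 + q\<^sup>2) / (2 * \<sigma>\<^sup>2))
        * sin (L * (1/q - 1/p)) * sgn (q - p)
      = - (q ^ n * exp (- q\<^sup>2 / (2 * \<sigma>\<^sup>2)))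
        * (p ^ (n-1) * exp (- p\<^sup>2 / (2 * \<sigma>\<^sup>2)) * sin (L * (1/q - 1/p)) * sgn (q - p))"
    for p q L :: real
  proof -
    have "exp (- (p\<^sup>2 + q\<^sup>2) / (2 * \<sigma>\<^sup>2)) = exp (- p\<^sup>2 / (2 * \<sigma>\<^sup>2)) * exp (- q\<^sup>2 / (2 * \<sigma>\<^sup>2))"
      by (simp add: exp_add[symmetric] diff_divide_distrib)
    then show ?thesis
      unfolding sign by (simp add: mult_ac)
  qed
  show ?thesis
    unfolding Eexp_def integrand set_integral_mult_right outer_integral_def inner_integral_def
    by (simp add: set_integral_uminus_real)
qed

lemma inner_integral_uminus: "inner_integral n s (- L) q = - inner_integral n s L q"
  unfolding inner_integral_def by (simp add: set_integral_uminus_real[symmetric])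

lemma outer_integral_uminus: "outer_integral n s (- L) = - outer_integral n s L"
  unfolding outer_integral_def inner_integral_uminus by (simp add: set_integral_uminus_real[symmetric])

lemma outer_integral_0: "outer_integral n s 0 = 0"
  unfolding outer_integral_def inner_integral_def by simp

lemma borel_measurable_inner_integral [measurable]: "inner_integral n s L \<in> borel_measurable borel"
proof -
  have "(\<lambda>(q, p). indicat_real {0<..} p *\<^sub>R
      (p ^ (n-1) * exp (- p\<^sup>2 / s) * sin (L * (1/q - 1/p)) * sgn (q - p)))
      \<in> borel_measurable (lborel \<Otimes>\<^sub>M lborel)"
    by measurable
  then show ?thesis
    unfolding inner_integral_def set_lebesgue_integral_def
    using lborel.borel_measurable_lebesgue_integral by simp
qed

lemma has_real_derivative_sin_phase_primitive:
  assumes "n \<ge> 1" and "s > 0" and "p > 0" and "L \<noteq> 0"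
  shows "((\<lambda>p. p ^ (n+1) * exp (- p\<^sup>2 / s) * cos (L * (1/q - 1/p)) / L) has_real_derivative
    (real (n+1) * p ^ n - 2/s * p ^ (n+2)) * exp (- p\<^sup>2 / s) * cos (L * (1/q - 1/p)) / L
      - p ^ (n-1) * exp (- p\<^sup>2 / s) * sin (L * (1/q - 1/p))) (at p)"
proof -
  have "p ^ (n+1) = p ^ (n-1) * p\<^sup>2" "p ^ (n+2) = p ^ (n+1) * p" "p ^ (n+1) = p ^ n * p"
    using assms(1) by (cases n; simp add: power2_eq_square)+
  with assms show ?thesis
    by (auto intro!: derivative_eq_intros simp: field_simps power2_eq_square)
qed

lemma abs_gauss_moment_deriv_mult_cos_le:
  assumes "p > 0" and "s > 0"
  shows "\<bar>(real (n+1) * p ^ n - 2/s * p ^ (n+2)) * exp (- p\<^sup>2 / s) * cos \<theta>\<bar>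
    \<le> real (n+1) * (p ^ n * exp (- p\<^sup>2 / s)) + 2/s * (p ^ (n+2) * exp (- p\<^sup>2 / s))"
proof -
  have "\<bar>(real (n+1) * p ^ n - 2/s * p ^ (n+2)) * exp (- p\<^sup>2 / s) * cos \<theta>\<bar>
      \<le> \<bar>real (n+1) * p ^ n - 2/s * p ^ (n+2)\<bar> * exp (- p\<^sup>2 / s)"
    by (simp add: abs_mult mult_left_le)
  also have "\<dots> \<le> (real (n+1) * p ^ n + 2/s * p ^ (n+2)) * exp (- p\<^sup>2 / s)"
  proof (rule mult_right_mono)
    have "0 \<le> real (n+1) * p ^ n" "0 \<le> 2/s * p ^ (n+2)"
      using assms by simp_all
    then show "\<bar>real (n+1) * p ^ n - 2/s * p ^ (n+2)\<bar> \<le> real (n+1) * p ^ n + 2/s * p ^ (n+2)"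
      by arith
  qed simp
  finally show ?thesis
    by (simp add: algebra_simps)
qed

lemma set_integral_sin_phase_by_parts:
  fixes a b :: ereal and q :: real
  assumes "0 \<le> a" and "a < b" and "n \<ge> 1" and "s > 0" and "L \<noteq> 0"
  defines "G \<equiv> \<lambda>p. p ^ (n+1) * exp (- p\<^sup>2 / s) * cos (L * (1/q - 1/p)) / L"
  assumes G_a: "((G \<circ> real_of_ereal) \<longlongrightarrow> G\<^sub>a) (at_right a)"
    and G_b: "((G \<circ> real_of_ereal) \<longlongrightarrow> G\<^sub>b) (at_left b)"
  shows "(LINT p:einterval a b|lborel. p ^ (n-1) * exp (- p\<^sup>2 / s) * sin (L * (1/q - 1/p)))
    = (LINT p:einterval a b|lborel. (real (n+1) * p ^ n - 2/s * p ^ (n+2)) * exp (- p\<^sup>2 / s)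
         * cos (L * (1/q - 1/p))) / L - (G\<^sub>b - G\<^sub>a)"
proof -
  define h where "h p = p ^ (n-1) * exp (- p\<^sup>2 / s) * sin (L * (1/q - 1/p))" for p
  define u where "u p = (real (n+1) * p ^ n - 2/s * p ^ (n+2)) * exp (- p\<^sup>2 / s) * cos (L * (1/q - 1/p))"
    for p
  define I where "I = einterval a b"
  have I_pos: "x > 0" if "x \<in> I" for x
    using that \<open>0 \<le> a\<close> ereal_less(2) order.strict_trans1 by (fastforce simp: I_def einterval_iff)
  have I_meas [measurable]: "I \<in> sets borel"
    by (simp add: I_def)
  have h: "set_integrable lborel I h"
  proof (rule set_integrable_abs_le)
    show "set_integrable lborel I (\<lambda>p. p ^ (n-1) * exp (- p\<^sup>2 / s))"
      using \<open>s > 0\<close> by (intro set_integrable_power_mult_exp_neg_sq) auto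
    show "set_borel_measurable lborel I h"
      unfolding set_borel_measurable_def h_def by measurable
    show "\<bar>h p\<bar> \<le> p ^ (n-1) * exp (- p\<^sup>2 / s)" if "p \<in> I" for p
      using I_pos[OF that] by (simp add: h_def abs_mult mult_left_le)
  qed
  have u: "set_integrable lborel I u"
  proof (rule set_integrable_abs_le)
    show "set_integrable lborel I (\<lambda>p. real (n+1) * (p ^ n * exp (- p\<^sup>2 / s))
        + 2/s * (p ^ (n+2) * exp (- p\<^sup>2 / s)))"
      using \<open>s > 0\<close>
      by (intro set_integral_add(1) set_integrable_mult_right set_integrable_power_mult_exp_neg_sq) auto
    show "set_borel_measurable lborel I u"
      unfolding set_borel_measurable_def u_def by measurable
    show "\<bar>u p\<bar> \<le> real (n+1) * (p ^ n * exp (- p\<^sup>2 / s)) + 2/s * (p ^ (n+2) * exp (- p\<^sup>2 / s))"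
      if "p \<in> I" for p
      unfolding u_def using I_pos[OF that] \<open>s > 0\<close> by (rule abs_gauss_moment_deriv_mult_cos_le)
  qed
  have "(LBINT p=a..b. u p / L - h p) = G\<^sub>b - G\<^sub>a"
  proof (rule interval_integral_FTC_integrable[OF \<open>a < b\<close> _ _ _ G_a G_b])
    fix x assume "a < ereal x" "ereal x < b"
    then have "x > 0"
      using I_pos by (simp add: I_def einterval_iff)
    then show "(G has_vector_derivative u x / L - h x) (at x)"
      using has_real_derivative_sin_phase_primitive[OF \<open>n \<ge> 1\<close> \<open>s > 0\<close> _ \<open>L \<noteq> 0\<close>]
      unfolding G_def u_def h_def has_real_derivative_iff_has_vector_derivative by (simp add: mult.assoc)
    show "isCont (\<lambda>p. u p / L - h p) x"
      using \<open>x > 0\<close> \<open>s > 0\<close> \<open>L \<noteq> 0\<close> unfolding u_def h_def by (intro continuous_intros) auto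
  next
    show "set_integrable lborel (einterval a b) (\<lambda>p. u p / L - h p)"
      using u h by (auto simp: I_def)
  qed
  then have "(LINT p:I|lborel. u p / L - h p) = G\<^sub>b - G\<^sub>a"
    using \<open>a < b\<close> by (simp add: I_def interval_lebesgue_integral_le_eq)
  moreover have "(LINT p:I|lborel. u p / L - h p) = (LINT p:I|lborel. u p) / L - (LINT p:I|lborel. h p)"
    using u h by (simp add: set_integral_diff(2))
  ultimately show ?thesis
    unfolding I_def h_def u_def by simp
qed

lemma sin_phase_primitive_tendsto:
  fixes q L s :: real and n :: nat
  assumes "s > 0" and "q > 0"
  defines "G \<equiv> \<lambda>p. p ^ (n+1) * exp (- p\<^sup>2 / s) * cos (L * (1/q - 1/p)) / L"
  shows "((G \<circ> real_of_ereal) \<longlongrightarrow> 0) (at_right (ereal 0))"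
    and "((G \<circ> real_of_ereal) \<longlongrightarrow> 0) (at_left \<infinity>)"
    and "((G \<circ> real_of_ereal) \<longlongrightarrow> G q) (at_left (ereal q))"
    and "((G \<circ> real_of_ereal) \<longlongrightarrow> G q) (at_right (ereal q))"
proof -
  have G_le: "\<forall>\<^sub>F p in F. norm (G p) \<le> p ^ (n+1) * exp (- p\<^sup>2 / s) / \<bar>L\<bar>"
    if "\<forall>\<^sub>F p in F. p > 0" for F
    using that by eventually_elim (simp add: G_def abs_mult divide_right_mono mult_left_le)
  have "((\<lambda>p::real. p ^ (n+1) * exp (- p\<^sup>2 / s)) \<longlongrightarrow> 0 ^ (n+1) * exp (- 0\<^sup>2 / s)) (at_right 0)"
    using \<open>s > 0\<close> by (intro tendsto_intros) auto
  then have "(G \<longlongrightarrow> 0) (at_right 0)"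
    by (intro Lim_null_comparison[OF G_le] tendsto_divide_zero) (simp_all add: eventually_at_right_less)
  then show "((G \<circ> real_of_ereal) \<longlongrightarrow> 0) (at_right (ereal 0))"
    unfolding ereal_tendsto_simps1 .
  have "((\<lambda>p::real. p ^ (n+1) * exp (- p\<^sup>2 / s)) \<longlongrightarrow> 0) at_top"
    using \<open>s > 0\<close> by real_asymp
  then have "(G \<longlongrightarrow> 0) at_top"
    by (intro Lim_null_comparison[OF G_le] tendsto_divide_zero) (simp_all add: eventually_gt_at_top)
  then show "((G \<circ> real_of_ereal) \<longlongrightarrow> 0) (at_left \<infinity>)"
    unfolding ereal_tendsto_simps1 .
  have "isCont G q"
    using assms by (cases "L = 0") (auto simp: G_def intro!: continuous_intros)
  then show "((G \<circ> real_of_ereal) \<longlongrightarrow> G q) (at_left (ereal q))"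
    and "((G \<circ> real_of_ereal) \<longlongrightarrow> G q) (at_right (ereal q))"
    unfolding ereal_tendsto_simps1 isCont_def by (simp_all add: filterlim_at_split)
qed

lemma inner_integral_split:
  assumes "s > 0" and "q > 0"
  shows "inner_integral n s L q
    = (LINT p:{0<..<q}|lborel. p ^ (n-1) * exp (- p\<^sup>2 / s) * sin (L * (1/q - 1/p)))
      - (LINT p:{q<..}|lborel. p ^ (n-1) * exp (- p\<^sup>2 / s) * sin (L * (1/q - 1/p)))"
proof -
  define h where "h p = p ^ (n-1) * exp (- p\<^sup>2 / s) * sin (L * (1/q - 1/p))" for p
  have h_sgn: "set_integrable lborel A (\<lambda>p. h p * sgn (q - p))"
    if [measurable]: "A \<in> sets borel" and "A \<subseteq> {0<..}" for A
  proof (rule set_integrable_abs_le)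
    show "set_integrable lborel A (\<lambda>p. p ^ (n-1) * exp (- p\<^sup>2 / s))"
      using \<open>s > 0\<close> by (intro set_integrable_power_mult_exp_neg_sq) auto
    show "set_borel_measurable lborel A (\<lambda>p. h p * sgn (q - p))"
      unfolding set_borel_measurable_def h_def by measurable
    show "\<bar>h p * sgn (q - p)\<bar> \<le> p ^ (n-1) * exp (- p\<^sup>2 / s)" if "p \<in> A" for p
      using \<open>A \<subseteq> {0<..}\<close> that by (auto simp: h_def abs_mult abs_sgn_eq mult_left_le)
  qed
  have "{0<..} = {0<..<q} \<union> {q..}"
    using \<open>q > 0\<close> by auto
  then have "inner_integral n s L q = (LINT p:{0<..<q} \<union> {q..}|lborel. h p * sgn (q - p))"
    by (simp add: inner_integral_def h_def)
  also have "\<dots> = (LINT p:{0<..<q}|lborel. h p * sgn (q - p)) + (LINT p:{q..}|lborel. h p * sgn (q - p))"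
    using \<open>q > 0\<close> by (intro set_integral_Un h_sgn) auto
  also have "(LINT p:{0<..<q}|lborel. h p * sgn (q - p)) = (LINT p:{0<..<q}|lborel. h p)"
    by (rule set_lebesgue_integral_cong) auto
  also have "(LINT p:{q..}|lborel. h p * sgn (q - p)) = (LINT p:{q..}|lborel. - h p)"
    by (rule set_lebesgue_integral_cong) (auto simp: h_def sgn_if)
  also have "\<dots> = (LINT p:{q<..}|lborel. - h p)"
  proof (rule set_integral_cong_set)
    show "set_borel_measurable lborel {q<..} (\<lambda>p. - h p)"
      unfolding set_borel_measurable_def h_def by measurable
    show "set_borel_measurable lborel {q..} (\<lambda>p. - h p)"
      unfolding set_borel_measurable_def h_def by measurable
    show "AE p in lborel. (p \<in> {q<..}) = (p \<in> {q..})"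
      using AE_lborel_singleton[of q] by eventually_elim auto
  qed
  finally show ?thesis
    by (simp add: set_integral_uminus_real h_def)
qed

lemma inner_integral_decay:
  assumes "n \<ge> 1" and "s > 0"
  obtains C where "C \<ge> 0"
    and "\<And>L q. L \<noteq> 0 \<Longrightarrow> q > 0 \<Longrightarrow> \<bar>inner_integral n s L q\<bar> \<le> (C + 2 * q ^ (n+1)) / \<bar>L\<bar>"
proof
  define U where "U p = real (n+1) * (p ^ n * exp (- p\<^sup>2 / s)) + 2/s * (p ^ (n+2) * exp (- p\<^sup>2 / s))"
    for p
  have U: "set_integrable lborel {0<..} U"
    unfolding U_def using \<open>s > 0\<close>
    by (intro set_integral_add(1) set_integrable_mult_right set_integrable_power_mult_exp_neg_sq) auto
  have U_nonneg: "0 \<le> U p" if "p \<in> {0<..}" for p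
    using that \<open>s > 0\<close> by (simp add: U_def)
  show "0 \<le> 2 * (LINT p:{0<..}|lborel. U p)"
    unfolding set_lebesgue_integral_def
    by (simp add: Bochner_Integration.integral_nonneg U_nonneg indicator_def)
  fix L q :: real
  assume "L \<noteq> 0" and "q > 0"
  define v where "v p = (real (n+1) * p ^ n - 2/s * p ^ (n+2)) * exp (- p\<^sup>2 / s) * cos (L * (1/q - 1/p))"
    for p
  have v_le: "\<bar>LINT p:A|lborel. v p\<bar> \<le> (LINT p:{0<..}|lborel. U p)" if "A \<subseteq> {0<..}" for A
  proof (rule abs_set_integral_le[OF U that U_nonneg])
    show "\<bar>v p\<bar> \<le> U p" if "p \<in> A" for p
      unfolding v_def U_def using that \<open>A \<subseteq> {0<..}\<close> \<open>s > 0\<close>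
      by (intro abs_gauss_moment_deriv_mult_cos_le) auto
  qed
  note G = sin_phase_primitive_tendsto[OF \<open>s > 0\<close> \<open>q > 0\<close>, of n L]
  note by_parts = set_integral_sin_phase_by_parts[OF _ _ \<open>n \<ge> 1\<close> \<open>s > 0\<close> \<open>L \<noteq> 0\<close>, of _ _ q]
  define K where "K = q ^ (n+1) * exp (- q\<^sup>2 / s)"
  have K: "0 \<le> K" "K \<le> q ^ (n+1)"
    using \<open>q > 0\<close> \<open>s > 0\<close> by (simp_all add: K_def mult_left_le)
  have "inner_integral n s L q
      = ((LINT p:{0<..<q}|lborel. v p) - (LINT p:{q<..}|lborel. v p) - 2 * K) / L"
    using by_parts[OF _ _ G(1,3)] by_parts[OF _ _ G(4,2)] \<open>q > 0\<close>
    by (simp add: inner_integral_split[OF \<open>s > 0\<close> \<open>q > 0\<close>] v_def K_def diff_divide_distrib)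
  also have "\<bar>\<dots>\<bar> \<le> (\<bar>LINT p:{0<..<q}|lborel. v p\<bar> + \<bar>LINT p:{q<..}|lborel. v p\<bar> + 2 * q ^ (n+1)) / \<bar>L\<bar>"
  proof (unfold abs_divide, rule divide_right_mono)
    show "\<bar>(LINT p:{0<..<q}|lborel. v p) - (LINT p:{q<..}|lborel. v p) - 2 * K\<bar>
      \<le> \<bar>LINT p:{0<..<q}|lborel. v p\<bar> + \<bar>LINT p:{q<..}|lborel. v p\<bar> + 2 * q ^ (n+1)"
      using K by arith
  qed simp
  also have "\<dots> \<le> (2 * (LINT p:{0<..}|lborel. U p) + 2 * q ^ (n+1)) / \<bar>L\<bar>"
  proof (rule divide_right_mono)
    have "{0<..<q} \<subseteq> {0<..}" "{q<..} \<subseteq> {0<..}"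
      using \<open>q > 0\<close> by auto
    from add_mono[OF v_le[OF this(1)] v_le[OF this(2)]]
    show "\<bar>LINT p:{0<..<q}|lborel. v p\<bar> + \<bar>LINT p:{q<..}|lborel. v p\<bar> + 2 * q ^ (n+1)
      \<le> 2 * (LINT p:{0<..}|lborel. U p) + 2 * q ^ (n+1)"
      by linarith
  qed simp
  finally show "\<bar>inner_integral n s L q\<bar> \<le> (2 * (LINT p:{0<..}|lborel. U p) + 2 * q ^ (n+1)) / \<bar>L\<bar>" .
qed

lemma outer_integral_decay:
  assumes "n \<ge> 1" and "s > 0"
  obtains M where "\<And>L. L \<noteq> 0 \<Longrightarrow> \<bar>outer_integral n s L\<bar> \<le> M / \<bar>L\<bar>"
proof -
  obtain C where "C \<ge> 0"
    and C: "\<And>L q. L \<noteq> 0 \<Longrightarrow> q > 0 \<Longrightarrow> \<bar>inner_integral n s L q\<bar> \<le> (C + 2 * q ^ (n+1)) / \<bar>L\<bar>"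
    using inner_integral_decay[OF assms] by blast
  define g where "g q = C * (q ^ n * exp (- q\<^sup>2 / s)) + 2 * (q ^ (2*n+1) * exp (- q\<^sup>2 / s))" for q
  have g: "set_integrable lborel {0<..} g"
    unfolding g_def using \<open>s > 0\<close>
    by (intro set_integral_add(1) set_integrable_mult_right set_integrable_power_mult_exp_neg_sq) auto
  have "\<bar>outer_integral n s L\<bar> \<le> (LINT q:{0<..}|lborel. g q / \<bar>L\<bar>)" if "L \<noteq> 0" for L
    unfolding outer_integral_def
  proof (rule abs_set_integral_le)
    show "set_integrable lborel {0<..} (\<lambda>q. g q / \<bar>L\<bar>)"
      using g by simp
    show "0 \<le> g q / \<bar>L\<bar>" if "q \<in> {0<..}" for q
      using that \<open>C \<ge> 0\<close> by (simp add: g_def)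
    show "\<bar>q ^ n * exp (- q\<^sup>2 / s) * inner_integral n s L q\<bar> \<le> g q / \<bar>L\<bar>" if "q \<in> {0<..}" for q
    proof -
      have "\<bar>q ^ n * exp (- q\<^sup>2 / s) * inner_integral n s L q\<bar>
          = q ^ n * exp (- q\<^sup>2 / s) * \<bar>inner_integral n s L q\<bar>"
        using that by (simp add: abs_mult)
      also have "\<dots> \<le> q ^ n * exp (- q\<^sup>2 / s) * ((C + 2 * q ^ (n+1)) / \<bar>L\<bar>)"
        using C[OF \<open>L \<noteq> 0\<close>] that by (intro mult_left_mono) auto
      also have "\<dots> = g q / \<bar>L\<bar>"
      proof -
        have "q ^ (2*n+1) = q ^ n * q ^ (n+1)"
          by (simp add: mult_2 flip: power_add)
        then show ?thesis
          unfolding g_def by (simp only:) (simp add: algebra_simps add_divide_distrib)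
      qed
      finally show ?thesis .
    qed
  qed simp
  then show thesis
    by (intro that[of "LINT q:{0<..}|lborel. g q"]) simp
qed

lemma outer_integral_tendsto_0:
  assumes "n \<ge> 1" and "s > 0"
  shows "(outer_integral n s \<longlongrightarrow> 0) at_infinity"
proof -
  obtain M where M: "\<And>L. L \<noteq> 0 \<Longrightarrow> norm (outer_integral n s L) \<le> M / norm L"
    using outer_integral_decay[OF assms] by auto
  have "\<forall>\<^sub>F L in at_infinity. (L :: real) \<noteq> 0"
    by (rule eventually_at_infinity[THEN iffD2]) (auto intro: exI[of _ 1])
  then show ?thesis
    by (intro Lim_null_comparison[OF eventually_mono[OF _ M]]
        real_tendsto_divide_at_top[OF tendsto_const filterlim_norm_at_top])
qed

definition inner_integral_slope :: "nat \<Rightarrow> real \<Rightarrow> real \<Rightarrow> real" where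
  "inner_integral_slope n s q =
     (LINT p:{0<..}|lborel. p ^ (n-1) * exp (- p\<^sup>2 / s) * (1/q - 1/p) * sgn (q - p))"

lemma borel_measurable_inner_integral_slope [measurable]:
  "inner_integral_slope n s \<in> borel_measurable borel"
proof -
  have "(\<lambda>(q, p). indicat_real {0<..} p *\<^sub>R
      (p ^ (n-1) * exp (- p\<^sup>2 / s) * (1/q - 1/p) * sgn (q - p)))
      \<in> borel_measurable (lborel \<Otimes>\<^sub>M lborel)"
    by measurable
  then show ?thesis
    unfolding inner_integral_slope_def set_lebesgue_integral_def
    using lborel.borel_measurable_lebesgue_integral by simp
qed

lemma inner_integral_div_eq:
  "inner_integral n s t q / t
    = (LINT p:{0<..}|lborel. p ^ (n-1) * exp (- p\<^sup>2 / s) * (sin (t * (1/q - 1/p)) / t) * sgn (q - p))"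
  unfolding inner_integral_def set_integral_divide_zero[symmetric] by (simp add: field_simps)

lemma abs_inner_integrand_div_le:
  fixes p q s t :: real
  assumes "n \<ge> 2" and "p > 0" and "q > 0"
  shows "\<bar>p ^ (n-1) * exp (- p\<^sup>2 / s) * (sin (t * (1/q - 1/p)) / t) * sgn (q - p)\<bar>
    \<le> 1/q * (p ^ (n-1) * exp (- p\<^sup>2 / s)) + p ^ (n-2) * exp (- p\<^sup>2 / s)"
proof -
  have "\<bar>1/q - 1/p\<bar> \<le> 1/q + 1/p"
    using assms(2,3) by (simp add: abs_le_iff)
  then have "\<bar>sin (t * (1/q - 1/p)) / t\<bar> \<le> 1/q + 1/p"
    by (rule order_trans[OF abs_sin_mult_div_le])
  moreover have "\<bar>sgn (q - p)\<bar> \<le> 1"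
    by (simp add: abs_sgn_eq)
  ultimately have "\<bar>p ^ (n-1) * exp (- p\<^sup>2 / s) * (sin (t * (1/q - 1/p)) / t) * sgn (q - p)\<bar>
      \<le> p ^ (n-1) * exp (- p\<^sup>2 / s) * (1/q + 1/p) * 1"
    unfolding abs_mult using assms(2,3) by (intro mult_mono) auto
  also have "\<dots> = 1/q * (p ^ (n-1) * exp (- p\<^sup>2 / s)) + p ^ (n-2) * exp (- p\<^sup>2 / s)"
  proof -
    have "p ^ (n-1) = p ^ (n-2) * p"
      using \<open>n \<ge> 2\<close> by (simp add: Suc_diff_Suc numeral_2_eq_2 flip: power_Suc2)
    with \<open>p > 0\<close> show ?thesis
      by (simp add: field_simps)
  qed
  finally show ?thesis .
qed

lemma inner_integral_div_tendsto:
  assumes "n \<ge> 2" and "s > 0" and "q > 0"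
  shows "((\<lambda>t. inner_integral n s t q / t) \<longlongrightarrow> inner_integral_slope n s q) (at 0)"
    and "set_integrable lborel {0<..} (\<lambda>p. p ^ (n-1) * exp (- p\<^sup>2 / s) * (1/q - 1/p) * sgn (q - p))"
proof -
  let ?g = "\<lambda>t p. p ^ (n-1) * exp (- p\<^sup>2 / s) * (sin (t * (1/q - 1/p)) / t) * sgn (q - p)"
  let ?w = "\<lambda>p. 1/q * (p ^ (n-1) * exp (- p\<^sup>2 / s)) + p ^ (n-2) * exp (- p\<^sup>2 / s)"
  have w: "set_integrable lborel {0<..} ?w"
    using \<open>s > 0\<close>
    by (intro set_integral_add(1) set_integrable_mult_right set_integrable_power_mult_exp_neg_sq) auto
  have g_meas: "set_borel_measurable lborel {0<..} (?g t)" for t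
    unfolding set_borel_measurable_def by measurable
  have f_meas: "set_borel_measurable lborel {0<..}
      (\<lambda>p. p ^ (n-1) * exp (- p\<^sup>2 / s) * (1/q - 1/p) * sgn (q - p))"
    unfolding set_borel_measurable_def by measurable
  have lim: "((\<lambda>t. ?g t p) \<longlongrightarrow> p ^ (n-1) * exp (- p\<^sup>2 / s) * (1/q - 1/p) * sgn (q - p)) (at 0)" for p
    by (intro tendsto_intros tendsto_sin_mult_div_at_0)
  have bound: "\<bar>?g t p\<bar> \<le> ?w p" if "p \<in> {0<..}" for t p
    using that assms by (intro abs_inner_integrand_div_le) auto
  show "((\<lambda>t. inner_integral n s t q / t) \<longlongrightarrow> inner_integral_slope n s q) (at 0)"
    unfolding inner_integral_div_eq inner_integral_slope_def
    by (rule set_integral_dominated_convergence_at[OF g_meas f_meas w lim bound])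
  show "set_integrable lborel {0<..} (\<lambda>p. p ^ (n-1) * exp (- p\<^sup>2 / s) * (1/q - 1/p) * sgn (q - p))"
    by (rule set_integrable_dominated_convergence_at[OF g_meas f_meas w lim bound])
qed

lemma abs_inner_integral_div_le:
  assumes "n \<ge> 2" and "s > 0" and "q > 0"
  shows "\<bar>inner_integral n s t q / t\<bar>
    \<le> 1/q * (LINT p:{0<..}|lborel. p ^ (n-1) * exp (- p\<^sup>2 / s))
      + (LINT p:{0<..}|lborel. p ^ (n-2) * exp (- p\<^sup>2 / s))"
proof -
  let ?w = "\<lambda>p. 1/q * (p ^ (n-1) * exp (- p\<^sup>2 / s)) + p ^ (n-2) * exp (- p\<^sup>2 / s)"
  have w1: "set_integrable lborel {0<..} (\<lambda>p. 1/q * (p ^ (n-1) * exp (- p\<^sup>2 / s)))"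
    and w2: "set_integrable lborel {0<..} (\<lambda>p. p ^ (n-2) * exp (- p\<^sup>2 / s))"
    using \<open>s > 0\<close> by (intro set_integrable_mult_right set_integrable_power_mult_exp_neg_sq; simp)+
  have "\<bar>inner_integral n s t q / t\<bar> \<le> (LINT p:{0<..}|lborel. ?w p)"
    unfolding inner_integral_div_eq
    using set_integral_add(1)[OF w1 w2] assms
    by (intro abs_set_integral_le abs_inner_integrand_div_le) auto
  also have "\<dots> = 1/q * (LINT p:{0<..}|lborel. p ^ (n-1) * exp (- p\<^sup>2 / s))
      + (LINT p:{0<..}|lborel. p ^ (n-2) * exp (- p\<^sup>2 / s))"
    by (simp only: set_integral_add(2)[OF w1 w2] set_integral_mult_right)
  finally show ?thesis .
qed

lemma outer_integral_div_tendsto: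
  assumes "n \<ge> 2" and "s > 0"
  shows "((\<lambda>L. outer_integral n s L / L)
      \<longlongrightarrow> (LINT q:{0<..}|lborel. q ^ n * exp (- q\<^sup>2 / s) * inner_integral_slope n s q)) (at 0)"
    and "set_integrable lborel {0<..} (\<lambda>q. q ^ n * exp (- q\<^sup>2 / s) * inner_integral_slope n s q)"
proof -
  define B\<^sub>0 where "B\<^sub>0 = (LINT p:{0<..}|lborel. p ^ (n-1) * exp (- p\<^sup>2 / s))"
  define B\<^sub>1 where "B\<^sub>1 = (LINT p:{0<..}|lborel. p ^ (n-2) * exp (- p\<^sup>2 / s))"
  let ?g = "\<lambda>t q. q ^ n * exp (- q\<^sup>2 / s) * (inner_integral n s t q / t)"
  let ?w = "\<lambda>q. B\<^sub>0 * (q ^ (n-1) * exp (- q\<^sup>2 / s)) + B\<^sub>1 * (q ^ n * exp (- q\<^sup>2 / s))"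
  have w: "set_integrable lborel {0<..} ?w"
    using \<open>s > 0\<close>
    by (intro set_integral_add(1) set_integrable_mult_right set_integrable_power_mult_exp_neg_sq) auto
  have g_meas: "set_borel_measurable lborel {0<..} (?g t)" for t
    unfolding set_borel_measurable_def by measurable
  have f_meas:
    "set_borel_measurable lborel {0<..} (\<lambda>q. q ^ n * exp (- q\<^sup>2 / s) * inner_integral_slope n s q)"
    unfolding set_borel_measurable_def by measurable
  have lim: "((\<lambda>t. ?g t q) \<longlongrightarrow> q ^ n * exp (- q\<^sup>2 / s) * inner_integral_slope n s q) (at 0)"
    if "q \<in> {0<..}" for q
    using that assms by (intro tendsto_intros inner_integral_div_tendsto(1)) auto
  have bound: "\<bar>?g t q\<bar> \<le> ?w q" if "q \<in> {0<..}" for t q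
  proof -
    have "q > 0"
      using that by simp
    have "\<bar>?g t q\<bar> = q ^ n * exp (- q\<^sup>2 / s) * \<bar>inner_integral n s t q / t\<bar>"
      using \<open>q > 0\<close> by (simp add: abs_mult)
    also have "\<dots> \<le> q ^ n * exp (- q\<^sup>2 / s) * (1/q * B\<^sub>0 + B\<^sub>1)"
      unfolding B\<^sub>0_def B\<^sub>1_def
      using \<open>q > 0\<close> assms by (intro mult_left_mono abs_inner_integral_div_le) auto
    also have "\<dots> = ?w q"
    proof -
      have "q ^ n = q ^ (n-1) * q"
        using \<open>n \<ge> 2\<close> by (simp flip: power_Suc2)
      with \<open>q > 0\<close> show ?thesis
        by (simp add: field_simps)
    qed
    finally show ?thesis .
  qed
  have "(\<lambda>L. outer_integral n s L / L) = (\<lambda>L. LINT q:{0<..}|lborel. ?g L q)"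
    by (simp add: outer_integral_def)
  then show "((\<lambda>L. outer_integral n s L / L)
      \<longlongrightarrow> (LINT q:{0<..}|lborel. q ^ n * exp (- q\<^sup>2 / s) * inner_integral_slope n s q)) (at 0)"
    using set_integral_dominated_convergence_at[OF g_meas f_meas w lim bound] by simp
  show "set_integrable lborel {0<..} (\<lambda>q. q ^ n * exp (- q\<^sup>2 / s) * inner_integral_slope n s q)"
    by (rule set_integrable_dominated_convergence_at[OF g_meas f_meas w lim bound])
qed

lemma inner_integral_slope_neg:
  assumes "n \<ge> 2" and "s > 0" and "q > 0"
  shows "inner_integral_slope n s q < 0"
proof -
  have "0 < (LINT p:{0<..}|lborel. - (p ^ (n-1) * exp (- p\<^sup>2 / s) * (1/q - 1/p) * sgn (q - p)))"
  proof (rule set_integral_pos_AE)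
    show "set_integrable lborel {0<..} (\<lambda>p. - (p ^ (n-1) * exp (- p\<^sup>2 / s) * (1/q - 1/p) * sgn (q - p)))"
      using inner_integral_div_tendsto(2)[OF assms] unfolding set_integrable_def by simp
    have neg: "(1/q - 1/p) * sgn (q - p) < 0" if "p > 0" "p \<noteq> q" for p
      using that \<open>q > 0\<close> by (cases "p < q") (auto simp: frac_less2 sgn_if)
    have pos: "0 < - (p ^ (n-1) * exp (- p\<^sup>2 / s) * (1/q - 1/p) * sgn (q - p))" if "p > 0" "p \<noteq> q" for p
      using mult_pos_neg[OF _ neg[OF that], of "p ^ (n-1) * exp (- p\<^sup>2 / s)"] that
      by (simp add: mult.assoc)
    show "AE p in lborel. p \<in> {0<..} \<longrightarrow> 0 < - (p ^ (n-1) * exp (- p\<^sup>2 / s) * (1/q - 1/p) * sgn (q - p))"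
      using AE_lborel_singleton[of q] by eventually_elim (use pos in blast)
  qed (auto simp: emeasure_lborel_Ioi_ne_0)
  then show ?thesis
    by (simp add: inner_integral_slope_def set_integral_uminus_real)
qed

lemma outer_integral_has_derivative_at_0:
  assumes "n \<ge> 2" and "s > 0"
  obtains D where "(outer_integral n s has_real_derivative D) (at 0)" and "D < 0"
proof
  show "(outer_integral n s has_real_derivative
      (LINT q:{0<..}|lborel. q ^ n * exp (- q\<^sup>2 / s) * inner_integral_slope n s q)) (at 0)"
    unfolding has_field_derivative_iff using outer_integral_div_tendsto(1)[OF assms]
    by (simp add: outer_integral_0)
  have "0 < (LINT q:{0<..}|lborel. - (q ^ n * exp (- q\<^sup>2 / s) * inner_integral_slope n s q))"
  proof (rule set_integral_pos_AE)
    show "set_integrable lborel {0<..} (\<lambda>q. - (q ^ n * exp (- q\<^sup>2 / s) * inner_integral_slope n s q))"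
      using outer_integral_div_tendsto(2)[OF assms] unfolding set_integrable_def by simp
    show "AE q in lborel. q \<in> {0<..} \<longrightarrow> 0 < - (q ^ n * exp (- q\<^sup>2 / s) * inner_integral_slope n s q)"
      using inner_integral_slope_neg[OF assms] by (auto simp: mult_pos_neg)
  qed (auto simp: emeasure_lborel_Ioi_ne_0)
  then show "(LINT q:{0<..}|lborel. q ^ n * exp (- q\<^sup>2 / s) * inner_integral_slope n s q) < 0"
    by (simp add: set_integral_uminus_real)
qed

theorem mainTheorem5:
  fixes \<alpha> hb \<sigma> :: real and n :: nat
  assumes "\<alpha> > 0" and "hb > 0" and "\<sigma> > 0" and "n \<ge> 2"
  shows "Eexp \<alpha> hb \<sigma> n 0 = 0
     \<and> (\<exists>D. (Eexp \<alpha> hb \<sigma> n has_real_derivative D) (at 0) \<and> D > 0)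
     \<and> (\<forall>\<tau>. Eexp \<alpha> hb \<sigma> n (-\<tau>) = - Eexp \<alpha> hb \<sigma> n \<tau>)
     \<and> (Eexp \<alpha> hb \<sigma> n \<longlongrightarrow> 0) at_top
     \<and> (Eexp \<alpha> hb \<sigma> n \<longlongrightarrow> 0) at_bot"
proof -
  define C where "C = \<alpha> / hb * (NG \<sigma> n)\<^sup>2"
  define c where "c = \<alpha>\<^sup>2 / hb"
  define \<Phi> where "\<Phi> = outer_integral n (2 * \<sigma>\<^sup>2)"
  have "NG \<sigma> n > 0"
    unfolding NG_def using \<open>\<sigma> > 0\<close>
    by (intro real_sqrt_gt_zero divide_pos_pos mult_pos_pos Gamma_real_pos) auto
  then have "C > 0" "c > 0"
    using assms by (simp_all add: C_def c_def)
  have s: "2 * \<sigma>\<^sup>2 > 0"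
    using \<open>\<sigma> > 0\<close> by simp
  have E: "Eexp \<alpha> hb \<sigma> n = (\<lambda>\<tau>. - C * \<Phi> (c * \<tau>))"
    using Eexp_eq_outer_integral[of n] \<open>n \<ge> 2\<close> by (auto simp: C_def c_def \<Phi>_def)
  obtain D where D: "(\<Phi> has_real_derivative D) (at 0)" "D < 0"
    using outer_integral_has_derivative_at_0[OF \<open>n \<ge> 2\<close> s] unfolding \<Phi>_def by blast
  have E_deriv: "((\<lambda>\<tau>. - C * \<Phi> (c * \<tau>)) has_real_derivative - C * (D * c)) (at 0)"
    using D(1) by (auto intro!: derivative_eq_intros DERIV_chain2[of \<Phi>])
  have E_deriv_pos: "- C * (D * c) > 0"
    using \<open>C > 0\<close> \<open>c > 0\<close> D(2) by (simp add: mult_pos_neg mult_neg_pos)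
  have "(\<Phi> \<longlongrightarrow> 0) at_infinity"
    using outer_integral_tendsto_0[OF _ s, of n] \<open>n \<ge> 2\<close> unfolding \<Phi>_def by simp
  moreover have "filterlim (\<lambda>\<tau>. c * \<tau>) at_infinity at_infinity"
    using \<open>c > 0\<close> by (intro tendsto_mult_filterlim_at_infinity[OF tendsto_const _ filterlim_ident]) simp
  ultimately have "((\<lambda>\<tau>. \<Phi> (c * \<tau>)) \<longlongrightarrow> 0) at_infinity"
    by (rule filterlim_compose)
  then have E_lim: "((\<lambda>\<tau>. - C * \<Phi> (c * \<tau>)) \<longlongrightarrow> 0) at_infinity"
    by (rule tendsto_mult_right_zero)
  show ?thesis
    using E_deriv E_deriv_pos E_lim filterlim_mono[OF E_lim order_refl at_top_le_at_infinity]
      filterlim_mono[OF E_lim order_refl at_bot_le_at_infinity]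
    unfolding E \<Phi>_def by (auto simp: outer_integral_0 outer_integral_uminus)
qed

end
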